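(* Let $G$ be a graph with filtration function $f$. Then $(f,f)$-FB persistence has the same expressive power as forward persistence for $f$ (each set of diagrams determines the other). Moreover, with $n$ filtration steps, the $(f,f)$-FB persistence diagrams can be computed as follows: (1) an $H_1$-class (cycle) born at stage $t=i$ of the filtration dies at stage $t=n+i$; (2) the $H_1$-classes born during the contraction stages are exactly the following: for each connected component that appears at filtration stage $i$ and is later merged into a pre-existing (older) component in the filtration stages, first at stage $j>i$, there is one $H_1$-class born at stage $n+i$ and dying at stage $n+j$; (3) the $H_0$ pairs (component death times) are recorded as usual by keeping one vertex representative per component, killing the younger representative when two components merge during filtration, and killing a representative when its component is merged into the contracted point during contraction.
   Context: Graphs are finite, undirected, possibly with self-loops and multi-edges. A filtration function is $f:V\cup E\to\mathbb{R}$ with $f(v),f(w)\le f(e)$ for every edge $e=(v,w)$. Let $a_1<\dots<a_n$ be its distinct values, $G_0=\emptyset$, $G_t=f^{-1}((-\infty,a_t])$ for $1\le t\le n$, and let the intermediate complex $\mathrm{IC}_t$ be the subgraph consisting of the vertices and edges of $G_t\setminus G_{t-1}$ together with endpoints of those edges. The $(f,f)$-FB sequence is $G_1\subset\dots\subset G_n=G\to W_1\to\dots\to W_n=\text{point}$, where $W_1=G/\mathrm{IC}_1$ and $W_i=W_{i-1}/( *\cup\mathrm{IC}_i)$, $*$ being the point to which previously contracted pieces were collapsed; stage $t$ ($1\le t\le n$) is $G_t$ and stage $n+i$ is $W_i$. Persistence diagrams: intervals (birth stage, death stage) of the interval decomposition of $H_k(-;\mathbb{Z}/2)$ applied to the sequence.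 Forward persistence for $f$: diagrams of $G_1\subset\dots\subset G_n$. *)

theory Defs
  imports Complex_Main "HOL-Library.Z2" "HOL-Library.Function_Algebras"
begin

text \<open>A graph: finite vertex set, finite edge set (edges have identities, so multi-edges
  are allowed), an endpoint map (an edge with equal endpoints is a self-loop), together with
  the filtration function f on vertices (fv) and edges (fe).\<close>

record ('v, 'e) fgraph =
  verts :: "'v set"
  edges :: "'e set"
  ends  :: "'e \<Rightarrow> 'v \<times> 'v"
  fv    :: "'v \<Rightarrow> real"
  fe    :: "'e \<Rightarrow> real"

definition filtered_graph :: "('v, 'e) fgraph \<Rightarrow> bool" where
  "filtered_graph G \<longleftrightarrow> finite (verts G) \<and> finite (edges G) \<and>
     (\<forall>e\<in>edges G. fst (ends G e) \<in> verts G \<and> snd (ends G e) \<in> verts G \<and>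
        fv G (fst (ends G e)) \<le> fe G e \<and> fv G (snd (ends G e)) \<le> fe G e)"

definition fvals :: "('v, 'e) fgraph \<Rightarrow> real set" where
  "fvals G = fv G ` verts G \<union> fe G ` edges G"

definition nsteps :: "('v, 'e) fgraph \<Rightarrow> nat" where
  "nsteps G = card (fvals G)"

definition aval :: "('v, 'e) fgraph \<Rightarrow> nat \<Rightarrow> real" where
  "aval G t = sorted_list_of_set (fvals G) ! (t - 1)"

definition subV :: "('v, 'e) fgraph \<Rightarrow> nat \<Rightarrow> 'v set" where
  "subV G t = (if t = 0 then {} else {v \<in> verts G. fv G v \<le> aval G t})"

definition subE :: "('v, 'e) fgraph \<Rightarrow> nat \<Rightarrow> 'e set" where
  "subE G t = (if t = 0 then {} else {e \<in> edges G. fe G e \<le> aval G t})"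

definition icE :: "('v, 'e) fgraph \<Rightarrow> nat \<Rightarrow> 'e set" where
  "icE G t = subE G t - subE G (t - 1)"

definition icV :: "('v, 'e) fgraph \<Rightarrow> nat \<Rightarrow> 'v set" where
  "icV G t = (subV G t - subV G (t - 1)) \<union> fst ` ends G ` icE G t \<union> snd ` ends G ` icE G t"

text \<open>Stage s (1 \<le> s \<le> 2n): for s \<le> n it is G_s; for s = n + i it is
  W_i = G with IC_1 \<union> ... \<union> IC_i successively contracted to the point None.
  Vertices of a stage live in 'v option (None is the contracted point *).\<close>

definition plev :: "('v, 'e) fgraph \<Rightarrow> nat \<Rightarrow> nat" where
  "plev G s = min s (nsteps G)"

definition colV :: "('v, 'e) fgraph \<Rightarrow> nat \<Rightarrow> 'v set" where
  "colV G s = (\<Union>t\<in>{1..s - nsteps G}. icV G t)"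

definition colE :: "('v, 'e) fgraph \<Rightarrow> nat \<Rightarrow> 'e set" where
  "colE G s = (\<Union>t\<in>{1..s - nsteps G}. icE G t)"

definition pt :: "'v set \<Rightarrow> 'v \<Rightarrow> 'v option" where
  "pt K v = (if v \<in> K then None else Some v)"

definition cellsV :: "('v, 'e) fgraph \<Rightarrow> nat \<Rightarrow> 'v option set" where
  "cellsV G s = pt (colV G s) ` subV G (plev G s)"

definition cellsE :: "('v, 'e) fgraph \<Rightarrow> nat \<Rightarrow> 'e set" where
  "cellsE G s = subE G (plev G s) - colE G s"

definition C0 :: "('v, 'e) fgraph \<Rightarrow> nat \<Rightarrow> ('v option \<Rightarrow> bit) set" where
  "C0 G s = {c. \<forall>x. x \<notin> cellsV G s \<longrightarrow> c x = 0}"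

definition C1 :: "('v, 'e) fgraph \<Rightarrow> nat \<Rightarrow> ('e \<Rightarrow> bit) set" where
  "C1 G s = {c. \<forall>e. e \<notin> cellsE G s \<longrightarrow> c e = 0}"

definition bd :: "('v, 'e) fgraph \<Rightarrow> nat \<Rightarrow> ('e \<Rightarrow> bit) \<Rightarrow> ('v option \<Rightarrow> bit)" where
  "bd G s c = (\<lambda>x. \<Sum>e\<in>cellsE G s. c e *
      (of_bool (pt (colV G s) (fst (ends G e)) = x) + of_bool (pt (colV G s) (snd (ends G e)) = x)))"

definition Z1 :: "('v, 'e) fgraph \<Rightarrow> nat \<Rightarrow> ('e \<Rightarrow> bit) set" where
  "Z1 G s = {c \<in> C1 G s. bd G s c = 0}"

definition B0 :: "('v, 'e) fgraph \<Rightarrow> nat \<Rightarrow> ('v option \<Rightarrow> bit) set" where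
  "B0 G s = bd G s ` C1 G s"

text \<open>The chain maps induced by the map from stage s to stage s+1
  (inclusion G_s \<subseteq> G_(s+1), resp. the quotient map collapsing onto the point).\<close>

definition vmap :: "'v set \<Rightarrow> 'v option \<Rightarrow> 'v option" where
  "vmap K x = (case x of None \<Rightarrow> None | Some v \<Rightarrow> pt K v)"

definition step0 :: "('v, 'e) fgraph \<Rightarrow> nat \<Rightarrow> ('v option \<Rightarrow> bit) \<Rightarrow> ('v option \<Rightarrow> bit)" where
  "step0 G s c = (\<lambda>x. \<Sum>y\<in>cellsV G s. if vmap (colV G (Suc s)) y = x then c y else 0)"

definition step1 :: "('v, 'e) fgraph \<Rightarrow> nat \<Rightarrow> ('e \<Rightarrow> bit) \<Rightarrow> ('e \<Rightarrow> bit)" where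
  "step1 G s c = (\<lambda>e. if e \<in> colE G (Suc s) then 0 else c e)"

primrec comp0 :: "('v, 'e) fgraph \<Rightarrow> nat \<Rightarrow> nat \<Rightarrow> ('v option \<Rightarrow> bit) \<Rightarrow> ('v option \<Rightarrow> bit)" where
  "comp0 G s 0 = (\<lambda>c. c)"
| "comp0 G s (Suc t) = (if Suc t \<le> s then (\<lambda>c. c) else step0 G t \<circ> comp0 G s t)"

primrec comp1 :: "('v, 'e) fgraph \<Rightarrow> nat \<Rightarrow> nat \<Rightarrow> ('e \<Rightarrow> bit) \<Rightarrow> ('e \<Rightarrow> bit)" where
  "comp1 G s 0 = (\<lambda>c. c)"
| "comp1 G s (Suc t) = (if Suc t \<le> s then (\<lambda>c. c) else step1 G t \<circ> comp1 G s t)"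

definition chscale :: "bit \<Rightarrow> ('a \<Rightarrow> bit) \<Rightarrow> ('a \<Rightarrow> bit)" where
  "chscale a c = (\<lambda>x. a * c x)"

definition chspan :: "('a \<Rightarrow> bit) set \<Rightarrow> ('a \<Rightarrow> bit) set" where
  "chspan S = module.span chscale S"

definition chdim :: "('a \<Rightarrow> bit) set \<Rightarrow> nat" where
  "chdim S = vector_space.dim chscale S"

text \<open>Rank of H_k(stage s) \<rightarrow> H_k(stage t), for a chain map phi with H_k = Z_k / B_k:
  the image is (phi(Z_k(s)) + B_k(t)) / B_k(t). For graphs Z_0 = C_0, B_1 = 0 and
  H_k = 0 for k \<ge> 2.\<close>

definition hrank :: "('v, 'e) fgraph \<Rightarrow> nat \<Rightarrow> nat \<Rightarrow> nat \<Rightarrow> nat" where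
  "hrank G k s t =
     (if k = 0 then chdim (chspan (comp0 G s t ` C0 G s \<union> B0 G t)) - chdim (B0 G t)
      else if k = 1 then chdim (chspan (comp1 G s t ` Z1 G s \<union> {0})) - chdim {0 :: 'e \<Rightarrow> bit}
      else 0)"

text \<open>For a sequence of m stages with rank function r (r i j = rank of the map from stage i
  to stage j), the multiplicity of the interval (b, d) in the interval decomposition:
  born at stage b, dies at stage d (d = m + 1 means it never dies), 1 \<le> b < d \<le> m + 1.\<close>

definition pers_mult :: "(nat \<Rightarrow> nat \<Rightarrow> nat) \<Rightarrow> nat \<Rightarrow> nat \<Rightarrow> nat \<Rightarrow> nat" where
  "pers_mult r m b d =
     (let r' = (\<lambda>i j. if 1 \<le> i \<and> i \<le> j \<and> j \<le> m then int (r i j) else 0) in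
      if 1 \<le> b \<and> b < d \<and> d \<le> m + 1
      then nat (r' b (d - 1) - r' (b - 1) (d - 1) - r' b d + r' (b - 1) d)
      else 0)"

text \<open>Forward persistence: stages G_1 \<subseteq> ... \<subseteq> G_n (the first n stages).\<close>

definition fwd_pd :: "('v, 'e) fgraph \<Rightarrow> nat \<Rightarrow> nat \<Rightarrow> nat \<Rightarrow> nat" where
  "fwd_pd G k b d = pers_mult (hrank G k) (nsteps G) b d"

definition fb_pd :: "('v, 'e) fgraph \<Rightarrow> nat \<Rightarrow> nat \<Rightarrow> nat \<Rightarrow> nat" where
  "fb_pd G k b d = pers_mult (hrank G k) (2 * nsteps G) b d"

end

theory Submission
  imports Defs
begin

text \<open>
  Every stage of the (f,f)-FB sequence is built from the sublevel graphs G_j, and its cellular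
  chain complex with Z/2 coefficients is a subcomplex of C(G_n) or a quotient of it by the
  chains of a sublevel graph. By rank-nullity, every rank of a map H_k(stage s) \<rightarrow> H_k(stage t)
  is therefore an integer combination of three kinds of numbers: the numbers of vertices and of
  edges of the G_j and the ranks of the boundary maps of G_j relative to the vertex sets of G_i.
  A persistence multiplicity is the mixed second difference of the rank function, in which all
  terms depending only on the birth or only on the death stage cancel. What survives shows that
  an H_1 class born at stage i dies at stage n + i; that the H_1 classes born during the
  contractions have the multiplicities of the H_0 intervals of the forward filtration, both
  being mixed differences of the relative boundary ranks; and that the H_0 diagram differs from
  the forward one only in the essential classes, which now die at stage n + i, except for the
  oldest component, which dies at 2n + 1. As n itself can be read off either family of diagrams,
  each family determines the other.
\<close>

section \<open>Chains with coefficients in Z/2\<close>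

declare add_bit_eq_xor [simp del] mult_bit_eq_and [simp del]

interpretation chains: vector_space "chscale :: bit \<Rightarrow> ('a \<Rightarrow> bit) \<Rightarrow> ('a \<Rightarrow> bit)"
  by unfold_locales (auto simp: chscale_def fun_eq_iff algebra_simps)

interpretation chain_maps: vector_space_pair
  "chscale :: bit \<Rightarrow> ('a \<Rightarrow> bit) \<Rightarrow> ('a \<Rightarrow> bit)" "chscale :: bit \<Rightarrow> ('b \<Rightarrow> bit) \<Rightarrow> ('b \<Rightarrow> bit)"
  by unfold_locales

lemma chscale_eq: "chscale a c = (if a = 0 then 0 else c)"
  by (cases a) (auto simp: chscale_def fun_eq_iff)

lemma linear_chainsI:
  fixes f :: "('a \<Rightarrow> bit) \<Rightarrow> ('b \<Rightarrow> bit)"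
  assumes "\<And>x y. f (x + y) = f x + f y" and "f 0 = 0"
  shows "Vector_Spaces.linear chscale chscale f"
  unfolding Vector_Spaces.linear_iff
  using assms chains.vector_space_axioms[where 'a = 'a] chains.vector_space_axioms[where 'a = 'b]
  by (auto simp: chscale_eq)

lemma independent_disjoint_span_Int:
  assumes B: "chains.independent B" and "C \<subseteq> B" "D \<subseteq> B" "C \<inter> D = {}"
  shows "chains.span C \<inter> chains.span D = {0}"
proof -
  have "x = 0" if C: "x \<in> chains.span C" and D: "x \<in> chains.span D" for x
  proof -
    have r: "chains.representation B x = chains.representation C x"
      "chains.representation B x = chains.representation D x"
      using chains.representation_extend[OF B] C D assms by blast+
    have "chains.representation B x b = 0" for b
      using chains.representation_ne_zero[of C x b] chains.representation_ne_zero[of D x b]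
        \<open>C \<inter> D = {}\<close> by (auto simp flip: r)
    then have "chains.representation B x = (\<lambda>b. 0)" by blast
    moreover have "x \<in> chains.span B"
      using chains.span_mono[OF \<open>C \<subseteq> B\<close>] C by blast
    ultimately show "x = 0"
      using chains.sum_nonzero_representation_eq[OF B] by force
  qed
  then show ?thesis by (auto simp: chains.span_zero)
qed

lemma rank_nullity:
  fixes f :: "('a \<Rightarrow> bit) \<Rightarrow> ('b \<Rightarrow> bit)"
  assumes f: "Vector_Spaces.linear chscale chscale f" and S: "chains.subspace S"
    and T: "finite T" "S \<subseteq> chains.span T"
  shows "chains.dim S = chains.dim (f ` S) + chains.dim {x \<in> S. f x = 0}"
proof -
  define K where "K = {x \<in> S. f x = 0}"
  obtain BK where BK: "BK \<subseteq> K" "chains.independent BK" "K \<subseteq> chains.span BK" "card BK = chains.dim K"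
    using chains.basis_exists by blast
  obtain B where B: "BK \<subseteq> B" "B \<subseteq> S" "chains.independent B" "S \<subseteq> chains.span B"
    using chains.maximal_independent_subset_extend[OF _ BK(2), of S] BK(1) K_def by blast
  have "finite B"
    using chains.independent_span_bound[OF T(1) B(3)] B(2) T(2) by auto
  define C where "C = B - BK"
  have span_B: "chains.span B \<subseteq> S"
    using chains.span_minimal[OF B(2) S] .
  have inj: "inj_on f (chains.span C)"
    unfolding chain_maps.linear_inj_on_iff_eq_0[OF f chains.subspace_span]
  proof (intro ballI impI)
    fix x assume x: "x \<in> chains.span C" "f x = 0"
    then have "x \<in> K"
      using span_B chains.span_mono[of C B] C_def K_def by auto
    then show "x = 0"
      using independent_disjoint_span_Int[OF B(3), of C BK] x(1) BK(3) B(1) C_def by blast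
  qed
  have "f ` B \<subseteq> insert 0 (f ` C)"
    using BK(1) K_def C_def by auto
  then have "chains.span (f ` B) \<subseteq> chains.span (f ` C)"
    using chains.span_mono[of "f ` B" "insert 0 (f ` C)"] by simp
  then have "f ` S \<subseteq> chains.span (f ` C)"
    using B(4) chain_maps.linear_span_image[OF f, of B] by blast
  moreover have "chains.independent (f ` C)"
    using chain_maps.linear_independent_injective_image[OF f _ inj]
      chains.independent_mono[OF B(3)] C_def by blast
  moreover have "f ` C \<subseteq> f ` S"
    using B(2) C_def by blast
  ultimately have "chains.dim (f ` S) = card (f ` C)"
    by (simp add: chains.basis_card_eq_dim)
  also have "\<dots> = card B - card BK"
    using card_image[OF inj_on_subset[OF inj chains.span_superset]] \<open>finite B\<close> B(1) C_def
    by (simp add: card_Diff_subset finite_subset)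
  finally show ?thesis
    using chains.basis_card_eq_dim[OF B(2,4,3)] BK(4) K_def card_mono[OF \<open>finite B\<close> B(1)] by simp
qed

definition chains_on :: "'a set \<Rightarrow> ('a \<Rightarrow> bit) set" where
  "chains_on A = {c. \<forall>x. x \<notin> A \<longrightarrow> c x = 0}"

definition unit_chain :: "'a \<Rightarrow> 'a \<Rightarrow> bit" where
  "unit_chain a = (\<lambda>x. if x = a then 1 else 0)"

definition zero_on :: "'a set \<Rightarrow> ('a \<Rightarrow> bit) \<Rightarrow> ('a \<Rightarrow> bit)" where
  "zero_on A c = (\<lambda>x. if x \<in> A then 0 else c x)"

lemma sum_apply: "(\<Sum>a\<in>A. f a) x = (\<Sum>a\<in>A. f a x)"
  by (induction A rule: infinite_finite_induct) auto

lemma chains_on_mono: "A \<subseteq> B \<Longrightarrow> chains_on A \<subseteq> chains_on B"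
  by (auto simp: chains_on_def)

lemma chains_on_empty [simp]: "chains_on {} = {0}"
  by (auto simp: chains_on_def fun_eq_iff)

lemma subspace_chains_on: "chains.subspace (chains_on A)"
  unfolding chains.subspace_def chains_on_def by (auto simp: chscale_def)

lemma unit_chain_in_chains_on: "a \<in> A \<Longrightarrow> unit_chain a \<in> chains_on A"
  by (auto simp: unit_chain_def chains_on_def)

lemma inj_unit_chain: "inj unit_chain"
  by (rule injI) (metis unit_chain_def zero_neq_one)

lemma chains_on_eq_span:
  assumes "finite A"
  shows "chains_on A = chains.span (unit_chain ` A)"
proof
  show "chains_on A \<subseteq> chains.span (unit_chain ` A)"
  proof
    fix c assume c: "c \<in> chains_on A"
    have "c = (\<Sum>a\<in>A. chscale (c a) (unit_chain a))"
      using assms c by (auto simp: fun_eq_iff sum_apply chscale_def unit_chain_def chains_on_def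
          if_distrib[of "times _"] cong: if_cong)
    also have "\<dots> \<in> chains.span (unit_chain ` A)"
      by (intro chains.span_sum chains.span_scale chains.span_base) auto
    finally show "c \<in> chains.span (unit_chain ` A)" .
  qed
  show "chains.span (unit_chain ` A) \<subseteq> chains_on A"
    by (rule chains.span_minimal) (auto simp: subspace_chains_on unit_chain_in_chains_on)
qed

lemma independent_unit_chains:
  assumes A: "finite A"
  shows "chains.independent (unit_chain ` A)"
proof (rule chains.independent_if_scalars_zero)
  show "finite (unit_chain ` A)" using A by simp
  fix g x assume sum: "(\<Sum>y\<in>unit_chain ` A. chscale (g y) y) = 0" and "x \<in> unit_chain ` A"
  then obtain a where a: "a \<in> A" "x = unit_chain a" by auto
  have "0 = (\<Sum>b\<in>A. chscale (g (unit_chain b)) (unit_chain b)) a"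
    using sum by (simp add: sum.reindex inj_on_subset[OF inj_unit_chain])
  also have "\<dots> = g x"
    using A a by (simp add: sum_apply chscale_def unit_chain_def if_distrib cong: if_cong)
  finally show "g x = 0" by simp
qed

lemma dim_chains_on: "finite A \<Longrightarrow> chains.dim (chains_on A) = card A"
  using chains.dim_span_eq_card_independent[OF independent_unit_chains]
  by (simp add: chains_on_eq_span card_image inj_on_subset[OF inj_unit_chain])

lemma dim_zero_space: "chains.dim {0} = 0"
  using dim_chains_on[of "{}"] by simp

lemma linear_zero_on: "Vector_Spaces.linear chscale chscale (zero_on A)"
  by (rule linear_chainsI) (auto simp: zero_on_def fun_eq_iff)

lemma subspace_kernel:
  fixes f :: "('a \<Rightarrow> bit) \<Rightarrow> ('b \<Rightarrow> bit)"
  assumes f: "Vector_Spaces.linear chscale chscale f" and S: "chains.subspace S"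
  shows "chains.subspace {x \<in> S. f x = 0}"
  using S unfolding chains.subspace_def
  by (auto simp: chain_maps.linear_0[OF f] chain_maps.linear_add[OF f]
      chain_maps.linear_scale[OF f])

lemma dim_image_eq_if_kernel_trivial:
  fixes f :: "('a \<Rightarrow> bit) \<Rightarrow> ('b \<Rightarrow> bit)"
  assumes f: "Vector_Spaces.linear chscale chscale f" and S: "chains.subspace S"
    and W: "finite W" "S \<subseteq> chains_on W" and ker: "\<And>x. x \<in> S \<Longrightarrow> f x = 0 \<Longrightarrow> x = 0"
  shows "chains.dim (f ` S) = chains.dim S"
proof -
  have "{x \<in> S. f x = 0} = {0}"
    using ker chains.subspace_0[OF S] chain_maps.linear_0[OF f] by auto
  then show ?thesis
    using rank_nullity[OF f S, of "unit_chain ` W"] W chains_on_eq_span[OF W(1)] dim_zero_space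
    by simp
qed

lemma dim_span_chains_on_Un:
  assumes A: "finite A" and B: "chains.subspace B" and W: "finite W" "B \<subseteq> chains_on W"
  shows "chains.dim (chains.span (chains_on A \<union> B)) = card A + chains.dim (zero_on A ` B)"
proof -
  let ?S = "chains.span (chains_on A \<union> B)"
  have "chains_on A \<union> B \<subseteq> chains_on (A \<union> W)"
    using chains_on_mono[of A "A \<union> W"] chains_on_mono[of W "A \<union> W"] W(2) by blast
  then have "?S \<subseteq> chains_on (A \<union> W)"
    by (rule chains.span_minimal[OF _ subspace_chains_on])
  then have S_fin: "?S \<subseteq> chains.span (unit_chain ` (A \<union> W))"
    by (simp add: chains_on_eq_span A W(1))
  have S_eq: "?S = {x + y | x y. x \<in> chains_on A \<and> y \<in> B}"
    using chains.span_Un[of "chains_on A" B] chains.span_eq_iff[THEN iffD2, OF B]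
      chains.span_eq_iff[THEN iffD2, OF subspace_chains_on[of A]] by simp
  have "zero_on A (x + y) = zero_on A y" if "x \<in> chains_on A" for x y
    using that by (auto simp: zero_on_def chains_on_def fun_eq_iff)
  then have "zero_on A ` ?S = zero_on A ` B"
    unfolding S_eq using chains.subspace_0[OF subspace_chains_on, of A] by force
  moreover have "{x \<in> ?S. zero_on A x = 0} = chains_on A"
    using chains.span_superset[of "chains_on A \<union> B"]
    by (auto simp: zero_on_def chains_on_def fun_eq_iff split: if_splits)
  ultimately show ?thesis
    using rank_nullity[OF linear_zero_on[of A] chains.subspace_span _ S_fin] dim_chains_on[OF A]
      A W(1) by (simp del: chains.dim_span)
qed

lemma dim_le_card_plus_dim_zero_on:
  assumes A: "finite A" and B: "chains.subspace B" and W: "finite W" "B \<subseteq> chains_on W"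
  shows "chains.dim B \<le> card A + chains.dim (zero_on A ` B)"
proof -
  have "chains.dim B = chains.dim (zero_on A ` B) + chains.dim {x \<in> B. zero_on A x = 0}"
    using rank_nullity[OF linear_zero_on B, of "unit_chain ` W"] W chains_on_eq_span[OF W(1)]
    by simp
  moreover have "{x \<in> B. zero_on A x = 0} \<subseteq> chains.span (unit_chain ` A)"
    using chains_on_eq_span[OF A]
    by (auto simp: chains_on_def zero_on_def fun_eq_iff split: if_splits)
  then have "chains.dim {x \<in> B. zero_on A x = 0} \<le> card (unit_chain ` A)"
    by (rule chains.dim_le_card) (simp add: A)
  then have "chains.dim {x \<in> B. zero_on A x = 0} \<le> card A"
    using card_image_le[OF A, of unit_chain] by linarith
  ultimately show ?thesis by simp
qed

lemma dim_less_if_psubset: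
  assumes B: "chains.subspace B" and S: "chains.subspace S" and "B \<subset> S"
    and W: "finite W" "S \<subseteq> chains_on W"
  shows "chains.dim B < chains.dim S"
proof -
  obtain x where x: "x \<in> S" "x \<notin> B"
    using \<open>B \<subset> S\<close> by blast
  have T: "finite (unit_chain ` W)" "S \<subseteq> chains.span (unit_chain ` W)"
    using W chains_on_eq_span by auto
  obtain BB where BB: "BB \<subseteq> B" "chains.independent BB" "B \<subseteq> chains.span BB"
    "card BB = chains.dim B"
    using chains.basis_exists by blast
  obtain BS where BS: "BS \<subseteq> S" "chains.independent BS" "S \<subseteq> chains.span BS"
    "card BS = chains.dim S"
    using chains.basis_exists by blast
  have "chains.span BB = B"
    using chains.span_subspace[OF BB(1,3) B] .
  then have ind: "chains.independent (insert x BB)"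
    using chains.independent_insertI BB(2) x(2) by blast
  have fin: "finite BB" "finite BS"
    using chains.independent_span_bound[OF T(1)] BB(1,2) BS(1,2) \<open>B \<subset> S\<close> T(2)
    by (meson order_trans psubset_imp_subset)+
  have "insert x BB \<subseteq> chains.span BS"
    using x(1) BB(1) \<open>B \<subset> S\<close> BS(3) by auto
  then have "card (insert x BB) \<le> card BS"
    using chains.independent_span_bound[OF fin(2) ind] by simp
  moreover have "x \<notin> BB"
    using x(2) BB(1) by blast
  ultimately show ?thesis
    using fin BB(4) BS(4) by simp
qed

lemma UN_diff_telescope:
  fixes X :: "nat \<Rightarrow> 'a set"
  assumes mono: "\<And>a b. a \<le> b \<Longrightarrow> b \<le> n \<Longrightarrow> X a \<subseteq> X b" and "X 0 = {}"
  shows "i \<le> n \<Longrightarrow> (\<Union>t\<in>{1..i}. X t - X (t - 1)) = X i"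
proof (induction i)
  case 0
  then show ?case using \<open>X 0 = {}\<close> by simp
next
  case (Suc i)
  have "{1..Suc i} = insert (Suc i) {1..i}" by auto
  then show ?case using Suc mono[of i "Suc i"] by auto
qed

lemma subV_0 [simp]: "subV G 0 = {}"
  by (simp add: subV_def)

lemma subE_0 [simp]: "subE G 0 = {}"
  by (simp add: subE_def)

context
  fixes G :: "('v, 'e) fgraph"
  assumes G: "filtered_graph G"
begin

lemma finite_fvals: "finite (fvals G)"
  using G by (auto simp: filtered_graph_def fvals_def)

lemma finite_subV: "finite (subV G t)"
  using G by (auto simp: subV_def filtered_graph_def)

lemma finite_subE: "finite (subE G t)"
  using G by (auto simp: subE_def filtered_graph_def)

lemma aval_mono: "1 \<le> a \<Longrightarrow> a \<le> b \<Longrightarrow> b \<le> nsteps G \<Longrightarrow> aval G a \<le> aval G b"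
  unfolding aval_def using finite_fvals by (intro sorted_nth_mono) (auto simp: nsteps_def)

lemma subV_mono: "a \<le> b \<Longrightarrow> b \<le> nsteps G \<Longrightarrow> subV G a \<subseteq> subV G b"
  using aval_mono[of a b] by (auto simp: subV_def)

lemma subE_mono: "a \<le> b \<Longrightarrow> b \<le> nsteps G \<Longrightarrow> subE G a \<subseteq> subE G b"
  using aval_mono[of a b] by (auto simp: subE_def)

lemma ends_in_subV: "e \<in> subE G t \<Longrightarrow> fst (ends G e) \<in> subV G t \<and> snd (ends G e) \<in> subV G t"
  using G by (auto simp: subE_def subV_def filtered_graph_def split: if_splits)

lemma subV_1_nonempty:
  assumes "1 \<le> nsteps G"
  shows "subV G 1 \<noteq> {}"
proof -
  have "aval G 1 \<in> fvals G"
    using assms finite_fvals nth_mem[of 0 "sorted_list_of_set (fvals G)"]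
    by (simp add: aval_def nsteps_def)
  then consider v where "v \<in> verts G" "fv G v = aval G 1"
    | e where "e \<in> edges G" "fe G e = aval G 1"
    by (auto simp: fvals_def)
  then show ?thesis
  proof cases
    case 1
    then show ?thesis by (auto simp: subV_def)
  next
    case (2 e)
    then have "fst (ends G e) \<in> subV G 1"
      using G by (auto simp: subV_def filtered_graph_def)
    then show ?thesis by auto
  qed
qed

lemma colE_stage: "s \<le> 2 * nsteps G \<Longrightarrow> colE G s = subE G (s - nsteps G)"
  unfolding colE_def icE_def
  by (rule UN_diff_telescope[where n = "nsteps G"]) (auto simp: subE_mono)

lemma colV_stage:
  assumes "s \<le> 2 * nsteps G"
  shows "colV G s = subV G (s - nsteps G)"
proof -
  let ?i = "s - nsteps G"
  have "?i \<le> nsteps G"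
    using assms by linarith
  then have telescope: "(\<Union>t\<in>{1..?i}. subV G t - subV G (t - 1)) = subV G ?i"
    by (intro UN_diff_telescope[where n = "nsteps G"]) (auto simp: subV_mono)
  have "icV G t \<subseteq> subV G t" for t
    using ends_in_subV by (auto simp: icV_def icE_def)
  then have sub: "icV G t \<subseteq> subV G ?i" if "t \<in> {1..?i}" for t
    using that subV_mono[of t ?i] \<open>?i \<le> nsteps G\<close> by force
  have incl: "subV G t - subV G (t - 1) \<subseteq> icV G t" for t
    by (auto simp: icV_def)
  show ?thesis
    unfolding colV_def
  proof (rule equalityI)
    show "(\<Union>t\<in>{1..?i}. icV G t) \<subseteq> subV G ?i"
      using sub by (rule UN_least)
    show "subV G ?i \<subseteq> (\<Union>t\<in>{1..?i}. icV G t)"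
      unfolding telescope[symmetric] by (rule UN_mono[OF order_refl incl])
  qed
qed

lemma cellsE_stage:
  "s \<le> 2 * nsteps G \<Longrightarrow> cellsE G s = subE G (plev G s) - subE G (s - nsteps G)"
  by (simp add: cellsE_def colE_stage)

end

section \<open>Boundary maps relative to a set of vertices\<close>

definition ends_within :: "('v, 'e) fgraph \<Rightarrow> 'e set \<Rightarrow> 'v set \<Rightarrow> bool" where
  "ends_within G F W \<longleftrightarrow> (\<forall>e\<in>F. fst (ends G e) \<in> W \<and> snd (ends G e) \<in> W)"

lemma ends_within_subE: "filtered_graph G \<Longrightarrow> ends_within G (subE G t) (subV G t)"
  by (simp add: ends_within_def ends_in_subV)

definition coll_bd :: "('v, 'e) fgraph \<Rightarrow> 'e set \<Rightarrow> 'v set \<Rightarrow> ('e \<Rightarrow> bit) \<Rightarrow> ('v option \<Rightarrow> bit)" where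
  "coll_bd G F K c = (\<lambda>x. \<Sum>e\<in>F. c e *
      (of_bool (pt K (fst (ends G e)) = x) + of_bool (pt K (snd (ends G e)) = x)))"

definition rel_bd :: "('v, 'e) fgraph \<Rightarrow> 'e set \<Rightarrow> 'v set \<Rightarrow> ('e \<Rightarrow> bit) \<Rightarrow> ('v option \<Rightarrow> bit)" where
  "rel_bd G F K c = zero_on (Some ` K) (coll_bd G F {} c)"

definition rel_bd_rank :: "('v, 'e) fgraph \<Rightarrow> 'e set \<Rightarrow> 'v set \<Rightarrow> nat" where
  "rel_bd_rank G F K = chains.dim (rel_bd G F K ` chains_on F)"

lemma bd_eq_coll_bd: "bd G s = coll_bd G (cellsE G s) (colV G s)"
  by (simp add: bd_def coll_bd_def fun_eq_iff)

lemma linear_coll_bd: "Vector_Spaces.linear chscale chscale (coll_bd G F K)"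
  by (rule linear_chainsI) (auto simp: coll_bd_def fun_eq_iff sum.distrib distrib_right)

lemma linear_rel_bd: "Vector_Spaces.linear chscale chscale (rel_bd G F K)"
  by (rule linear_chainsI)
    (auto simp: rel_bd_def zero_on_def coll_bd_def fun_eq_iff sum.distrib distrib_right)

lemma coll_bd_restrict:
  "finite F \<Longrightarrow> A \<subseteq> F \<Longrightarrow> c \<in> chains_on A \<Longrightarrow> coll_bd G F K c = coll_bd G A K c"
  unfolding coll_bd_def fun_eq_iff
  by (auto intro!: sum.mono_neutral_right simp: chains_on_def)

lemma rel_bd_restrict:
  "finite F \<Longrightarrow> A \<subseteq> F \<Longrightarrow> c \<in> chains_on A \<Longrightarrow> rel_bd G F K c = rel_bd G A K c"
  by (simp add: rel_bd_def coll_bd_restrict)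

lemma rel_bd_rank_no_edges [simp]: "rel_bd_rank G {} K = 0"
  by (simp add: rel_bd_rank_def chain_maps.linear_0[OF linear_rel_bd] dim_zero_space)

lemma rel_bd_rank_Diff:
  assumes F: "finite F" and D: "ends_within G D K"
  shows "rel_bd_rank G (F - D) K = rel_bd_rank G F K"
proof -
  have drop: "rel_bd G F K c = rel_bd G (F - D) K (zero_on D c)" if "c \<in> chains_on F" for c
  proof -
    have c': "zero_on D c \<in> chains_on (F - D)"
      using that by (auto simp: chains_on_def zero_on_def)
    have "rel_bd G (F - D) K (zero_on D c) = rel_bd G F K (zero_on D c)"
      by (rule rel_bd_restrict[OF F Diff_subset c', symmetric])
    also have "\<dots> = rel_bd G F K c"
      using D by (auto simp: rel_bd_def zero_on_def coll_bd_def pt_def ends_within_def fun_eq_iff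
          intro!: sum.cong)
    finally show ?thesis by simp
  qed
  have "rel_bd G F K ` chains_on F = rel_bd G (F - D) K ` chains_on (F - D)"
  proof
    show "rel_bd G F K ` chains_on F \<subseteq> rel_bd G (F - D) K ` chains_on (F - D)"
      using drop by (auto simp: chains_on_def zero_on_def)
    show "rel_bd G (F - D) K ` chains_on (F - D) \<subseteq> rel_bd G F K ` chains_on F"
    proof
      fix y assume "y \<in> rel_bd G (F - D) K ` chains_on (F - D)"
      then obtain c where c: "c \<in> chains_on (F - D)" "y = rel_bd G (F - D) K c"
        by blast
      moreover have "rel_bd G F K c = rel_bd G (F - D) K c"
        by (rule rel_bd_restrict[OF F Diff_subset c(1)])
      ultimately have "y = rel_bd G F K c"
        by simp
      moreover have "c \<in> chains_on F"
        using c(1) chains_on_mono[of "F - D" F] by blast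
      ultimately show "y \<in> rel_bd G F K ` chains_on F" by blast
    qed
  qed
  then show ?thesis by (simp add: rel_bd_rank_def)
qed

lemma zero_on_None_coll_bd: "zero_on {None} (coll_bd G F K c) = rel_bd G F K c"
proof
  fix x
  show "zero_on {None} (coll_bd G F K c) x = rel_bd G F K c x"
  proof (cases x)
    case None
    then show ?thesis by (simp add: zero_on_def rel_bd_def coll_bd_def pt_def)
  next
    case (Some v)
    then show ?thesis
      by (cases "v \<in> K")
        (auto simp: zero_on_def rel_bd_def coll_bd_def pt_def intro!: sum.cong sum.neutral)
  qed
qed

lemma coll_bd_Some: "coll_bd G F K c (Some v) = (if v \<in> K then 0 else coll_bd G F {} c (Some v))"
  using fun_cong[OF zero_on_None_coll_bd[of G F K c], of "Some v"]
  by (simp add: zero_on_def rel_bd_def inj_image_mem_iff[OF inj_Some])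

lemma of_bool_add_of_bool_not: "of_bool P + of_bool Q = (of_bool (\<not> P) + of_bool (\<not> Q) :: bit)"
  by (cases P; cases Q) (simp_all add: one_add_one)

lemma sum_incidences_outside:
  assumes "finite W" "a \<in> W" "b \<in> W"
  shows "(\<Sum>v\<in>W. if v \<in> K then 0 else of_bool (a = v) + of_bool (b = v)) =
    (of_bool (a \<notin> K) + of_bool (b \<notin> K) :: bit)"
proof -
  have "(\<Sum>v\<in>W. if v \<in> K then 0 else of_bool (a = v) + of_bool (b = v)) =
      (\<Sum>v\<in>W. if v = a then of_bool (a \<notin> K) else 0) +
      (\<Sum>v\<in>W. if v = b then of_bool (b \<notin> K) else (0 :: bit))"
    unfolding sum.distrib[symmetric] by (rule sum.cong) auto
  then show ?thesis
    using assms by simp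
qed

text \<open>Over Z/2 every edge contributes to the coordinates of both of its ends, so the coordinate of
  the collapsed point is the sum of all other coordinates.\<close>

lemma coll_bd_None:
  assumes W: "finite W" and F: "ends_within G F W"
  shows "coll_bd G F K c None = (\<Sum>v\<in>W. rel_bd G F K c (Some v))"
proof -
  let ?a = "\<lambda>e. fst (ends G e)" and ?b = "\<lambda>e. snd (ends G e)"
  have "rel_bd G F K c (Some v) =
      (\<Sum>e\<in>F. c e * (if v \<in> K then 0 else of_bool (?a e = v) + of_bool (?b e = v)))" for v
    by (cases "v \<in> K")
      (auto simp: rel_bd_def zero_on_def coll_bd_def pt_def inj_image_mem_iff[OF inj_Some])
  then have "(\<Sum>v\<in>W. rel_bd G F K c (Some v)) =
      (\<Sum>v\<in>W. \<Sum>e\<in>F. c e * (if v \<in> K then 0 else of_bool (?a e = v) + of_bool (?b e = v)))"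
    by simp
  also have "\<dots> = (\<Sum>e\<in>F. c e * (\<Sum>v\<in>W. if v \<in> K then 0 else of_bool (?a e = v) + of_bool (?b e = v)))"
    by (subst sum.swap) (simp only: sum_distrib_left)
  also have "\<dots> = (\<Sum>e\<in>F. c e * (of_bool (?a e \<notin> K) + of_bool (?b e \<notin> K)))"
    using F W by (intro sum.cong) (auto simp: ends_within_def sum_incidences_outside)
  also have "\<dots> = coll_bd G F K c None"
    unfolding coll_bd_def of_bool_add_of_bool_not[of "?a _ \<notin> K"]
    by (intro sum.cong) (auto simp: pt_def)
  finally show ?thesis by simp
qed

lemma coll_bd_eq_0_iff:
  assumes "finite W" "ends_within G F W"
  shows "coll_bd G F K c = 0 \<longleftrightarrow> rel_bd G F K c = 0"
proof
  assume "coll_bd G F K c = 0"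
  then show "rel_bd G F K c = 0"
    by (simp flip: zero_on_None_coll_bd) (simp add: zero_on_def zero_fun_def)
next
  assume rel: "rel_bd G F K c = 0"
  show "coll_bd G F K c = 0"
  proof
    fix x
    show "coll_bd G F K c x = 0 x"
    proof (cases x)
      case None
      then show ?thesis using coll_bd_None[OF assms] rel by simp
    next
      case (Some v)
      then show ?thesis
        using fun_cong[OF zero_on_None_coll_bd[of G F K c], of x] rel by (simp add: zero_on_def)
    qed
  qed
qed

lemma sum_coll_bd_eq_0:
  assumes "finite W" "ends_within G F W"
  shows "(\<Sum>v\<in>W. coll_bd G F {} c (Some v)) = 0"
proof -
  have "coll_bd G F {} c None = 0" "rel_bd G F {} c = coll_bd G F {} c"
    by (simp_all add: coll_bd_def pt_def rel_bd_def zero_on_def)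
  then show ?thesis
    using coll_bd_None[OF assms, of "{}" c] by simp
qed

lemma coll_bd_in_chains_on:
  "ends_within G F W \<Longrightarrow> coll_bd G F K c \<in> chains_on (insert None (Some ` W))"
  unfolding chains_on_def coll_bd_def ends_within_def by (auto intro!: sum.neutral simp: pt_def)

lemma dim_coll_bd_image:
  assumes F: "finite F" and W: "finite W" "ends_within G F W"
  shows "chains.dim (coll_bd G F K ` chains_on F) = rel_bd_rank G F K"
proof -
  let ?B = "coll_bd G F K ` chains_on F"
  have B: "chains.subspace ?B"
    by (rule chain_maps.linear_subspace_image[OF linear_coll_bd subspace_chains_on])
  have "chains.dim (zero_on {None} ` ?B) = chains.dim ?B"
  proof (rule dim_image_eq_if_kernel_trivial[OF linear_zero_on B])
    show "finite (insert None (Some ` W))" "?B \<subseteq> chains_on (insert None (Some ` W))"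
      using W coll_bd_in_chains_on by auto
    show "x = 0" if "x \<in> ?B" "zero_on {None} x = 0" for x
      using that coll_bd_eq_0_iff[OF W] by (auto simp: zero_on_None_coll_bd)
  qed
  moreover have "zero_on {None} ` ?B = rel_bd G F K ` chains_on F"
    by (simp add: image_image zero_on_None_coll_bd)
  ultimately show ?thesis
    by (simp add: rel_bd_rank_def)
qed

lemma dim_rel_cycles:
  assumes "finite F"
  shows "chains.dim {c \<in> chains_on F. rel_bd G F K c = 0} + rel_bd_rank G F K = card F"
  using rank_nullity[OF linear_rel_bd[of G F K] subspace_chains_on[of F], of "unit_chain ` F"]
    dim_chains_on[of F] assms by (simp add: chains_on_eq_span rel_bd_rank_def)

lemma zero_on_coll_bd:
  assumes "K = {} \<or> K \<inter> W \<noteq> {}"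
  shows "zero_on (pt K ` W) (coll_bd G F K c) = rel_bd G F (K \<union> W) c"
proof
  fix x
  show "zero_on (pt K ` W) (coll_bd G F K c) x = rel_bd G F (K \<union> W) c x"
  proof (cases x)
    case None
    show ?thesis
    proof (cases "K = {}")
      case True
      then show ?thesis
        using None by (simp add: zero_on_def rel_bd_def coll_bd_def pt_def)
    next
      case False
      then have "None \<in> pt K ` W"
        using assms by (auto simp: pt_def image_iff)
      then show ?thesis
        using None by (simp add: zero_on_def rel_bd_def coll_bd_def pt_def)
    qed
  next
    case (Some v)
    have "Some v \<in> pt K ` W \<longleftrightarrow> v \<in> W \<and> v \<notin> K"
      by (auto simp: pt_def image_iff)
    then show ?thesis
      using Some coll_bd_Some[of G F K c v] by (auto simp: zero_on_def rel_bd_def)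
  qed
qed

section \<open>Ranks of the maps induced on homology\<close>

lemma chdim_eq [simp]: "chdim S = chains.dim S"
  by (simp add: chdim_def)

lemma chspan_eq [simp]: "chspan S = chains.span S"
  by (simp add: chspan_def)

lemma C0_eq: "C0 G s = chains_on (cellsV G s)"
  by (simp add: C0_def chains_on_def)

lemma C1_eq: "C1 G s = chains_on (cellsE G s)"
  by (simp add: C1_def chains_on_def)

lemma colE_mono: "s \<le> t \<Longrightarrow> colE G s \<subseteq> colE G t"
  unfolding colE_def by (intro UN_mono) auto

lemma colV_mono: "s \<le> t \<Longrightarrow> colV G s \<subseteq> colV G t"
  unfolding colV_def by (intro UN_mono) auto

lemma comp1_eq_zero_on:
  assumes "s \<le> t" "c \<in> C1 G s"
  shows "comp1 G s t c = zero_on (colE G t) c"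
  using assms(1)
proof (induction t)
  case 0
  then show ?case by (simp add: zero_on_def colE_def)
next
  case (Suc t)
  show ?case
  proof (cases "Suc t \<le> s")
    case True
    then have "s = Suc t" using Suc by simp
    then show ?thesis
      using assms(2) by (auto simp: zero_on_def C1_def cellsE_def fun_eq_iff)
  next
    case False
    then show ?thesis
      using Suc colE_mono[of t "Suc t" G] by (auto simp: step1_def zero_on_def fun_eq_iff)
  qed
qed

lemma ends_within_cellsE: "filtered_graph G \<Longrightarrow> ends_within G (cellsE G s) (subV G (plev G s))"
  using ends_within_subE by (auto simp: ends_within_def cellsE_def)

lemma Z1_eq:
  assumes "filtered_graph G"
  shows "Z1 G s = {c \<in> chains_on (cellsE G s). rel_bd G (cellsE G s) (colV G s) c = 0}"
  unfolding Z1_def C1_eq bd_eq_coll_bd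
  using coll_bd_eq_0_iff[OF finite_subV[OF assms] ends_within_cellsE[OF assms]] by auto

text \<open>A cycle of stage s maps to zero in stage t exactly when it lies in the edges contracted by
  stage t, so the rank is the dimension of the cycles minus that of the cycles in those edges.\<close>

lemma hrank_1_eq:
  assumes G: "filtered_graph G" and "s \<le> t"
  defines "F \<equiv> cellsE G s" and "K \<equiv> colV G s" and "X \<equiv> colE G t"
  shows "int (hrank G 1 s t) = (int (card F) - int (rel_bd_rank G F K))
    - (int (card (F \<inter> X)) - int (rel_bd_rank G (F \<inter> X) K))"
proof -
  have F: "finite F"
    using finite_subE[OF G] by (simp add: F_def cellsE_def)
  define Z where "Z = {c \<in> chains_on F. rel_bd G F K c = 0}"
  have Z1: "Z1 G s = Z"
    using Z1_eq[OF G] by (simp add: Z_def F_def K_def)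
  have "comp1 G s t c = zero_on X c" if "c \<in> Z" for c
    unfolding X_def
    by (rule comp1_eq_zero_on[OF \<open>s \<le> t\<close>]) (use that in \<open>simp add: Z_def F_def C1_eq\<close>)
  then have image: "comp1 G s t ` Z1 G s = zero_on X ` Z"
    unfolding Z1 by simp
  have Z: "chains.subspace Z"
    unfolding Z_def by (rule subspace_kernel[OF linear_rel_bd subspace_chains_on])
  have "chains.subspace (zero_on X ` Z)"
    by (rule chain_maps.linear_subspace_image[OF linear_zero_on Z])
  then have "chains.span (zero_on X ` Z \<union> {0}) = zero_on X ` Z"
    using chains.subspace_0 chains.span_eq_iff
    by (metis insert_absorb sup_bot.right_neutral Un_insert_right)
  then have "hrank G 1 s t = chains.dim (zero_on X ` Z)"
    by (simp add: hrank_def image dim_zero_space)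
  moreover have "chains.dim Z = chains.dim (zero_on X ` Z) + chains.dim {c \<in> Z. zero_on X c = 0}"
    using rank_nullity[OF linear_zero_on Z, of "unit_chain ` F"] F
    by (simp add: Z_def chains_on_eq_span)
  moreover have "{c \<in> Z. zero_on X c = 0} = {c \<in> chains_on (F \<inter> X). rel_bd G (F \<inter> X) K c = 0}"
  proof -
    have supp: "c \<in> chains_on F \<and> zero_on X c = 0 \<longleftrightarrow> c \<in> chains_on (F \<inter> X)" for c
      by (auto simp: chains_on_def zero_on_def fun_eq_iff)
    have restrict: "c \<in> chains_on (F \<inter> X) \<Longrightarrow> rel_bd G F K c = rel_bd G (F \<inter> X) K c" for c
      by (rule rel_bd_restrict[OF F Int_lower1])
    have "c \<in> Z \<and> zero_on X c = 0 \<longleftrightarrow> c \<in> chains_on (F \<inter> X) \<and> rel_bd G (F \<inter> X) K c = 0" for c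
      using supp[of c] restrict[of c] unfolding Z_def by auto
    then show ?thesis by blast
  qed
  ultimately show ?thesis
    using dim_rel_cycles[OF F, of G K] dim_rel_cycles[of "F \<inter> X" G K] F
    by (simp add: Z_def)
qed

lemma pt_empty: "pt {} = Some"
  by (simp add: pt_def fun_eq_iff)

lemma vmap_pt: "K \<subseteq> K' \<Longrightarrow> vmap K' (pt K v) = pt K' v"
  by (auto simp: vmap_def pt_def)

lemma linear_step0: "Vector_Spaces.linear chscale chscale (step0 G t)"
  by (rule linear_chainsI)
    (auto simp: step0_def fun_eq_iff sum.distrib[symmetric] zero_fun_def intro!: sum.cong)

lemma step0_unit_chain:
  assumes "finite (cellsV G t)" "y \<in> cellsV G t"
  shows "step0 G t (unit_chain y) = unit_chain (vmap (colV G (Suc t)) y)"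
proof
  fix x
  have "step0 G t (unit_chain y) x =
      (\<Sum>y'\<in>cellsV G t. if y' = y then (if vmap (colV G (Suc t)) y = x then 1 else 0) else 0)"
    unfolding step0_def unit_chain_def by (intro sum.cong) auto
  then show "step0 G t (unit_chain y) x = unit_chain (vmap (colV G (Suc t)) y) x"
    using assms by (simp add: unit_chain_def)
qed

lemma step0_image:
  assumes fin: "finite (cellsV G t)" and A: "A \<subseteq> cellsV G t"
  shows "step0 G t ` chains_on A = chains_on (vmap (colV G (Suc t)) ` A)"
proof -
  have "finite A"
    using A fin finite_subset by blast
  then have "step0 G t ` chains_on A = chains.span (step0 G t ` unit_chain ` A)"
    by (simp add: chains_on_eq_span chain_maps.linear_span_image[OF linear_step0])
  also have "step0 G t ` unit_chain ` A = unit_chain ` vmap (colV G (Suc t)) ` A"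
    using step0_unit_chain[OF fin] A by (force simp: image_image)
  finally show ?thesis
    using \<open>finite A\<close> by (simp add: chains_on_eq_span)
qed

lemma comp0_image:
  assumes G: "filtered_graph G"
  shows "s \<le> t \<Longrightarrow> comp0 G s t ` C0 G s = chains_on (pt (colV G t) ` subV G (plev G s))"
proof (induction t)
  case 0
  then show ?case by (simp add: C0_eq cellsV_def)
next
  case (Suc t)
  show ?case
  proof (cases "Suc t \<le> s")
    case True
    then have "s = Suc t" using Suc by simp
    then show ?thesis by (simp add: C0_eq cellsV_def)
  next
    case False
    then have IH: "comp0 G s t ` C0 G s = chains_on (pt (colV G t) ` subV G (plev G s))"
      using Suc by simp
    have "plev G s \<le> plev G t" "plev G t \<le> nsteps G"
      using False by (auto simp: plev_def)
    then have sub: "pt (colV G t) ` subV G (plev G s) \<subseteq> cellsV G t"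
      using subV_mono[OF G] by (auto simp: cellsV_def)
    have "comp0 G s (Suc t) ` C0 G s = step0 G t ` comp0 G s t ` C0 G s"
      using False by (simp add: image_comp)
    also have "\<dots> = chains_on (vmap (colV G (Suc t)) ` pt (colV G t) ` subV G (plev G s))"
      unfolding IH by (rule step0_image[OF _ sub]) (simp add: cellsV_def finite_subV[OF G])
    also have "\<dots> = chains_on (pt (colV G (Suc t)) ` subV G (plev G s))"
      using vmap_pt[OF colV_mono[of t "Suc t" G]] by (simp add: image_image)
    finally show ?thesis .
  qed
qed

lemma B0_eq: "B0 G t = coll_bd G (cellsE G t) (colV G t) ` chains_on (cellsE G t)"
  by (simp add: B0_def bd_eq_coll_bd C1_eq)

lemma hrank_0_eq_dim:
  assumes "filtered_graph G" "s \<le> t"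
  shows "hrank G 0 s t =
    chains.dim (chains.span (chains_on (pt (colV G t) ` subV G (plev G s)) \<union> B0 G t))
      - chains.dim (B0 G t)"
  using comp0_image[OF assms] by (simp add: hrank_def)

text \<open>The image of H_0 of stage s in stage t is spanned by the images A of the vertices of stage s
  modulo the boundaries B of stage t; its dimension is |A| + dim (B with the coordinates in A set
  to zero) - dim B.\<close>

lemma hrank_0_eq:
  assumes G: "filtered_graph G" and "s \<le> t"
    and KW: "colV G t = {} \<or> colV G t \<inter> subV G (plev G s) \<noteq> {}"
  defines "F \<equiv> cellsE G t" and "K \<equiv> colV G t" and "W \<equiv> subV G (plev G s)"
  shows "int (hrank G 0 s t) = int (card (pt K ` W)) + int (rel_bd_rank G F (K \<union> W))
    - int (rel_bd_rank G F K)"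
proof -
  define A where "A = pt K ` W"
  define B where "B = coll_bd G F K ` chains_on F"
  have F: "finite F"
    using finite_subE[OF G] by (simp add: F_def cellsE_def)
  have A: "finite A"
    using finite_subV[OF G] by (simp add: A_def W_def)
  have ends: "ends_within G F (subV G (plev G t))"
    using ends_within_cellsE[OF G] by (simp add: F_def)
  have fin: "finite (insert None (Some ` subV G (plev G t)))"
    using finite_subV[OF G] by simp
  have B: "chains.subspace B"
    unfolding B_def by (rule chain_maps.linear_subspace_image[OF linear_coll_bd subspace_chains_on])
  have B_sub: "B \<subseteq> chains_on (insert None (Some ` subV G (plev G t)))"
    using coll_bd_in_chains_on[OF ends] by (auto simp: B_def)
  have "zero_on A ` B = rel_bd G F (K \<union> W) ` chains_on F"
    by (simp add: B_def A_def image_image zero_on_coll_bd[OF KW[folded K_def W_def]])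
  then have dim_cut: "chains.dim (zero_on A ` B) = rel_bd_rank G F (K \<union> W)"
    by (simp add: rel_bd_rank_def)
  have dim_B: "chains.dim B = rel_bd_rank G F K"
    using dim_coll_bd_image[OF F finite_subV[OF G] ends] by (simp add: B_def)
  have "hrank G 0 s t = chains.dim (chains.span (chains_on A \<union> B)) - chains.dim B"
    using hrank_0_eq_dim[OF G \<open>s \<le> t\<close>] by (simp add: B0_eq A_def B_def F_def K_def W_def)
  then show ?thesis
    using dim_span_chains_on_Un[OF A B fin B_sub] dim_le_card_plus_dim_zero_on[OF A B fin B_sub]
      dim_cut dim_B by (simp add: A_def)
qed

text \<open>A vertex of G_1 is not homologous to zero in G_n: the coefficients of a boundary sum to zero.\<close>

lemma hrank_0_1_nsteps_pos:
  assumes G: "filtered_graph G" and n1: "1 \<le> nsteps G"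
  shows "1 \<le> hrank G 0 1 (nsteps G)"
proof -
  let ?n = "nsteps G"
  define A where "A = Some ` subV G 1"
  define B where "B = B0 G ?n"
  define S where "S = chains.span (chains_on A \<union> B)"
  define W where "W = insert None (Some ` subV G ?n)"
  have stage: "colV G ?n = {}" "cellsE G ?n = subE G ?n" "plev G 1 = 1" "plev G ?n = ?n"
    using n1 by (simp_all add: colV_stage[OF G] cellsE_stage[OF G] plev_def)
  have B_eq: "B = coll_bd G (subE G ?n) {} ` chains_on (subE G ?n)"
    by (simp add: B_def B0_eq stage)
  have A: "finite A" and fin_W: "finite W"
    using finite_subV[OF G] by (simp_all add: A_def W_def)
  have B: "chains.subspace B"
    unfolding B_eq by (rule chain_maps.linear_subspace_image[OF linear_coll_bd subspace_chains_on])
  have "B \<subseteq> chains_on W"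
    using coll_bd_in_chains_on[OF ends_within_subE[OF G]] by (auto simp: B_eq W_def)
  then have "chains_on A \<union> B \<subseteq> chains_on (A \<union> W)"
    using chains_on_mono[of A "A \<union> W"] chains_on_mono[of W "A \<union> W"] by blast
  then have S_sub: "S \<subseteq> chains_on (A \<union> W)"
    unfolding S_def by (rule chains.span_minimal[OF _ subspace_chains_on])
  obtain v where v: "v \<in> subV G 1"
    using subV_1_nonempty[OF G n1] by blast
  have x_S: "unit_chain (Some v) \<in> S"
    using v unit_chain_in_chains_on[of "Some v" A]
    by (auto simp: S_def A_def intro: chains.span_base)
  have "(\<Sum>w\<in>subV G ?n. unit_chain (Some v) (Some w)) = 1"
    using v subV_mono[OF G n1 order_refl] finite_subV[OF G] by (auto simp: unit_chain_def)
  then have x_B: "unit_chain (Some v) \<notin> B"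
    using sum_coll_bd_eq_0[OF finite_subV[OF G] ends_within_subE[OF G]] by (auto simp: B_eq)
  have S: "chains.subspace S"
    unfolding S_def by (rule chains.subspace_span)
  have "B \<subset> S"
    using x_S x_B chains.span_superset[of "chains_on A \<union> B"] by (auto simp: S_def)
  have "chains.dim B < chains.dim S"
    by (rule dim_less_if_psubset[OF B S \<open>B \<subset> S\<close> _ S_sub]) (simp add: A fin_W)
  moreover have "hrank G 0 1 ?n = chains.dim S - chains.dim B"
    using hrank_0_eq_dim[OF G n1] by (simp only: stage pt_empty S_def A_def B_def)
  ultimately show ?thesis by simp
qed

section \<open>Ranks in terms of the sublevel graphs\<close>

definition ecard :: "('v, 'e) fgraph \<Rightarrow> nat \<Rightarrow> int" where
  "ecard G j = int (card (subE G j))"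

definition vcard :: "('v, 'e) fgraph \<Rightarrow> nat \<Rightarrow> int" where
  "vcard G j = int (card (subV G j))"

definition rel_rank :: "('v, 'e) fgraph \<Rightarrow> nat \<Rightarrow> nat \<Rightarrow> int" where
  "rel_rank G i j = int (rel_bd_rank G (subE G j) (subV G i))"

text \<open>For i \<le> j this is the dimension of H_1 of G_j with G_i collapsed to a point.\<close>

definition cycle_rank :: "('v, 'e) fgraph \<Rightarrow> nat \<Rightarrow> nat \<Rightarrow> int" where
  "cycle_rank G i j = ecard G j - ecard G i - rel_rank G i j"

lemma ecard_0 [simp]: "ecard G 0 = 0" and vcard_0 [simp]: "vcard G 0 = 0"
  by (simp_all add: ecard_def vcard_def)

context
  fixes G :: "('v, 'e) fgraph"
  assumes G: "filtered_graph G"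
begin

lemma subE_Int: "a \<le> nsteps G \<Longrightarrow> b \<le> nsteps G \<Longrightarrow> subE G a \<inter> subE G b = subE G (min a b)"
  using subE_mono[OF G, of a b] subE_mono[OF G, of b a] by (auto simp: min_def)

lemma subV_Un: "a \<le> nsteps G \<Longrightarrow> b \<le> nsteps G \<Longrightarrow> subV G a \<union> subV G b = subV G (max a b)"
  using subV_mono[OF G, of a b] subV_mono[OF G, of b a] by (auto simp: max_def)

lemma card_subE_Diff:
  "i \<le> j \<Longrightarrow> j \<le> nsteps G \<Longrightarrow> int (card (subE G j - subE G i)) = ecard G j - ecard G i"
  using subE_mono[OF G, of i j] finite_subE[OF G]
  by (simp add: ecard_def card_Diff_subset of_nat_diff card_mono)

lemma rel_bd_rank_sublevel_Diff:
  assumes "i \<le> j" "j \<le> nsteps G" "subV G i \<subseteq> K"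
  shows "rel_bd_rank G (subE G j - subE G i) K = rel_bd_rank G (subE G j) K"
  using assms ends_within_subE[OF G, of i] finite_subE[OF G]
  by (intro rel_bd_rank_Diff) (auto simp: ends_within_def)

lemma rel_rank_self: "i \<le> nsteps G \<Longrightarrow> rel_rank G i i = 0"
  using rel_bd_rank_sublevel_Diff[of i i "subV G i"] by (simp add: rel_rank_def)

lemma card_pt_subV:
  assumes "1 \<le> p" "p \<le> nsteps G" "c \<le> nsteps G"
  shows "int (card (pt (subV G c) ` subV G p)) = of_bool (1 \<le> c) + vcard G p - vcard G (min p c)"
proof (cases "c = 0")
  case True
  then show ?thesis
    by (simp add: pt_def vcard_def card_image)
next
  case False
  then have "subV G 1 \<subseteq> subV G c \<inter> subV G p"
    using assms subV_mono[OF G] by simp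
  then have "subV G c \<inter> subV G p \<noteq> {}"
    using subV_1_nonempty[OF G] assms by auto
  then have "pt (subV G c) ` subV G p = insert None (Some ` (subV G p - subV G c))"
    by (auto simp: pt_def image_iff)
  moreover have "subV G p - subV G c = subV G p - subV G (min p c)"
    using subV_mono[OF G, of p c] assms by (auto simp: min_def)
  ultimately have "card (pt (subV G c) ` subV G p) = Suc (card (subV G p - subV G (min p c)))"
    using finite_subV[OF G] by (simp add: card_image)
  moreover have "subV G (min p c) \<subseteq> subV G p"
    using subV_mono[OF G] assms by simp
  ultimately show ?thesis
    using False finite_subV[OF G] by (simp add: vcard_def card_Diff_subset of_nat_diff card_mono)
qed

lemma hrank_1_sublevel:
  assumes "s \<le> t" "t \<le> 2 * nsteps G"
  shows "int (hrank G 1 s t) =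
    cycle_rank G (s - nsteps G) (plev G s)
      - cycle_rank G (s - nsteps G) (min (plev G s) (t - nsteps G))"
proof -
  let ?n = "nsteps G"
  let ?c = "s - ?n" and ?p = "plev G s" and ?m = "min (plev G s) (t - ?n)"
  have le: "?c \<le> ?m" "?m \<le> ?p" "?p \<le> ?n" "t - ?n \<le> ?n"
    using assms by (auto simp: plev_def)
  have "cellsE G s \<inter> colE G t = subE G ?m - subE G ?c"
    using assms le subE_Int[of ?p "t - ?n"] by (auto simp: cellsE_stage[OF G] colE_stage[OF G])
  then show ?thesis
    using hrank_1_eq[OF G \<open>s \<le> t\<close>] assms le
      card_subE_Diff[of ?c ?p] card_subE_Diff[of ?c ?m]
      rel_bd_rank_sublevel_Diff[of ?c ?p] rel_bd_rank_sublevel_Diff[of ?c ?m]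
    by (simp add: cellsE_stage[OF G] colV_stage[OF G] cycle_rank_def rel_rank_def)
qed

lemma hrank_0_sublevel:
  assumes "1 \<le> s" "s \<le> t" "t \<le> 2 * nsteps G"
  shows "int (hrank G 0 s t) = of_bool (nsteps G < t)
    + vcard G (plev G s) - vcard G (min (plev G s) (t - nsteps G))
    + rel_rank G (max (t - nsteps G) (plev G s)) (plev G t) - rel_rank G (t - nsteps G) (plev G t)"
proof -
  let ?n = "nsteps G"
  let ?c = "t - ?n" and ?p = "plev G s" and ?q = "plev G t"
  have le: "1 \<le> ?p" "?p \<le> ?q" "?c \<le> ?q" "?q \<le> ?n" "max ?c ?p \<le> ?q"
    using assms by (auto simp: plev_def)
  have "colV G t = {} \<or> colV G t \<inter> subV G ?p \<noteq> {}"
  proof (cases "?c = 0")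
    case False
    then have "subV G 1 \<subseteq> subV G ?c \<inter> subV G ?p"
      using le subV_mono[OF G] by simp
    then show ?thesis
      using subV_1_nonempty[OF G] le assms by (auto simp: colV_stage[OF G])
  qed (use assms in \<open>simp add: colV_stage[OF G]\<close>)
  moreover have "1 \<le> ?c \<longleftrightarrow> ?n < t"
    by arith
  ultimately show ?thesis
    using hrank_0_eq[OF G \<open>s \<le> t\<close>] assms le card_pt_subV[of ?p ?c] subV_Un[of ?c ?p]
      rel_bd_rank_sublevel_Diff[of ?c ?q "subV G (max ?c ?p)"]
      rel_bd_rank_sublevel_Diff[of ?c ?q "subV G ?c"] subV_mono[OF G, of ?c "max ?c ?p"]
    by (simp add: cellsE_stage[OF G] colV_stage[OF G] rel_rank_def)
qed

end

section \<open>Persistence multiplicities as mixed differences\<close>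

definition ext_rank :: "(nat \<Rightarrow> nat \<Rightarrow> nat) \<Rightarrow> nat \<Rightarrow> nat \<Rightarrow> nat \<Rightarrow> int" where
  "ext_rank r m i j = (if 1 \<le> i \<and> i \<le> j \<and> j \<le> m then int (r i j) else 0)"

definition mixed_diff :: "(nat \<Rightarrow> nat \<Rightarrow> int) \<Rightarrow> nat \<Rightarrow> nat \<Rightarrow> int" where
  "mixed_diff R b d = R b (d - 1) - R (b - 1) (d - 1) - R b d + R (b - 1) d"

lemma pers_mult_eq_mixed_diff:
  "pers_mult r m b d =
    (if 1 \<le> b \<and> b < d \<and> d \<le> m + 1 then nat (mixed_diff (ext_rank r m) b d) else 0)"
  by (simp only: pers_mult_def Let_def ext_rank_def mixed_diff_def)

lemma pers_mult_eq_0: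
  assumes "\<not> (1 \<le> b \<and> b < d \<and> d \<le> m + 1)"
  shows "pers_mult r m b d = 0"
  by (simp only: pers_mult_eq_mixed_diff assms if_False)

lemma pers_mult_truncate:
  assumes "d \<le> m" "d \<le> m'"
  shows "pers_mult r m b d = pers_mult r m' b d"
proof -
  have "d - 1 \<le> m" "d - 1 \<le> m'" "d \<le> m + 1" "d \<le> m' + 1"
    using assms by linarith+
  then show ?thesis
    using assms by (simp only: pers_mult_def Let_def simp_thms)
qed

lemma pers_mult_1_top: "1 \<le> m \<Longrightarrow> pers_mult r m 1 (m + 1) = r 1 m"
  by (simp add: pers_mult_eq_mixed_diff mixed_diff_def ext_rank_def)

lemma mixed_diff_cong:
  "(\<And>i j. b - 1 \<le> i \<Longrightarrow> i \<le> b \<Longrightarrow> d - 1 \<le> j \<Longrightarrow> j \<le> d \<Longrightarrow> R i j = R' i j)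
    \<Longrightarrow> mixed_diff R b d = mixed_diff R' b d"
  by (simp add: mixed_diff_def)

lemma mixed_diff_add: "mixed_diff (\<lambda>i j. R i j + S i j) b d = mixed_diff R b d + mixed_diff S b d"
  and mixed_diff_diff: "mixed_diff (\<lambda>i j. R i j - S i j) b d = mixed_diff R b d - mixed_diff S b d"
  and mixed_diff_fst: "mixed_diff (\<lambda>i j. f i) b d = 0"
  and mixed_diff_snd: "mixed_diff (\<lambda>i j. g j) b d = 0"
  and mixed_diff_mult: "mixed_diff (\<lambda>i j. f i * g j) b d = (f b - f (b - 1)) * (g (d - 1) - g d)"
  by (simp_all add: mixed_diff_def algebra_simps)

lemma mixed_diff_min:
  assumes "1 \<le> b"
  shows "mixed_diff (\<lambda>i j. h (min i (j - n))) b d = (if d = n + b then h (b - 1) - h b else 0)"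
proof -
  have pred: "d - 1 - n = d - n - 1" by simp
  consider "d - n = b" | "b < d - n" | "d - n < b" by linarith
  then show ?thesis
  proof cases
    case 1
    then have "d - 1 - n = b - 1" "d = n + b" using assms by auto
    then show ?thesis by (simp add: mixed_diff_def)
  next
    case 2
    then have "min b (d - 1 - n) = b" "min (b - 1) (d - 1 - n) = b - 1"
      "min b (d - n) = b" "min (b - 1) (d - n) = b - 1" "d \<noteq> n + b"
      using pred by auto
    then show ?thesis by (simp add: mixed_diff_def)
  next
    case 3
    then have "min b (d - 1 - n) = d - 1 - n" "min (b - 1) (d - 1 - n) = d - 1 - n"
      "min b (d - n) = d - n" "min (b - 1) (d - n) = d - n" "d \<noteq> n + b"
      using pred by auto
    then show ?thesis by (simp add: mixed_diff_def)
  qed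
qed

context
  fixes G :: "('v, 'e) fgraph"
  assumes G: "filtered_graph G" and n1: "1 \<le> nsteps G"
begin

lemma cycle_rank_0_0 [simp]: "cycle_rank G 0 0 = 0"
  using rel_rank_self[OF G] by (simp add: cycle_rank_def)

lemma ext_rank_fwd_1:
  assumes "i \<le> j" "j \<le> nsteps G + 1" "i \<le> nsteps G"
  shows "ext_rank (hrank G 1) (nsteps G) i j = cycle_rank G 0 i * of_bool (j \<le> nsteps G)"
  using assms hrank_1_sublevel[OF G, of i j] by (cases "i = 0") (auto simp: ext_rank_def plev_def)

lemma ext_rank_fwd_0:
  assumes "i \<le> j" "j \<le> nsteps G + 1" "i \<le> nsteps G"
  shows "ext_rank (hrank G 0) (nsteps G) i j =
    of_bool (j \<le> nsteps G) * (vcard G i + rel_rank G i j - rel_rank G 0 j)"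
  using assms hrank_0_sublevel[OF G, of i j] by (cases "i = 0") (auto simp: ext_rank_def plev_def)

lemma ext_rank_fb_1:
  assumes "i \<le> j" "j \<le> 2 * nsteps G + 1" "i \<le> 2 * nsteps G"
  shows "ext_rank (hrank G 1) (2 * nsteps G) i j = cycle_rank G (i - nsteps G) (plev G i)
    - cycle_rank G (i - nsteps G) (min (plev G i) (j - nsteps G))"
proof -
  have "plev G i \<le> nsteps G" by (simp add: plev_def)
  then show ?thesis
    using assms hrank_1_sublevel[OF G, of i j] by (auto simp: ext_rank_def plev_def min_def)
qed

lemma ext_rank_fb_0:
  assumes "i \<le> j" "j \<le> 2 * nsteps G + 1" "i \<le> 2 * nsteps G"
  shows "ext_rank (hrank G 0) (2 * nsteps G) i j =
    of_bool (1 \<le> i \<and> nsteps G < j \<and> j \<le> 2 * nsteps G)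
    + vcard G (plev G i) - vcard G (min (plev G i) (j - nsteps G))
    + rel_rank G (max (j - nsteps G) (plev G i)) (plev G j) - rel_rank G (j - nsteps G) (plev G j)"
proof -
  have "plev G i \<le> nsteps G" by (simp add: plev_def)
  then show ?thesis
    using assms hrank_0_sublevel[OF G, of i j] by (auto simp: ext_rank_def plev_def min_def max_def)
qed

lemma fwd_pd_1:
  "fwd_pd G 1 b d = (if 1 \<le> b \<and> b \<le> nsteps G \<and> d = nsteps G + 1
    then nat (cycle_rank G 0 b - cycle_rank G 0 (b - 1)) else 0)"
proof (cases "1 \<le> b \<and> b < d \<and> d \<le> nsteps G + 1")
  case True
  have "mixed_diff (ext_rank (hrank G 1) (nsteps G)) b d =
      mixed_diff (\<lambda>i j. cycle_rank G 0 i * of_bool (j \<le> nsteps G)) b d"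
    by (rule mixed_diff_cong, subst ext_rank_fwd_1) (use True in auto)
  then show ?thesis
    using True by (auto simp: fwd_pd_def pers_mult_eq_mixed_diff mixed_diff_mult)
qed (auto simp: fwd_pd_def intro: pers_mult_eq_0)

lemma fwd_pd_0_essential:
  assumes "1 \<le> b" "b \<le> nsteps G"
  shows "fwd_pd G 0 b (nsteps G + 1) = nat (vcard G b + rel_rank G b (nsteps G)
    - vcard G (b - 1) - rel_rank G (b - 1) (nsteps G))"
  using assms ext_rank_fwd_0[of b "nsteps G"] ext_rank_fwd_0[of "b - 1" "nsteps G"]
    ext_rank_fwd_0[of b "nsteps G + 1"] ext_rank_fwd_0[of "b - 1" "nsteps G + 1"]
  by (simp add: fwd_pd_def pers_mult_eq_mixed_diff mixed_diff_def)

lemma fwd_pd_0_finite: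
  assumes "1 \<le> b" "b < d" "d \<le> nsteps G"
  shows "fwd_pd G 0 b d = nat (mixed_diff (rel_rank G) b d)"
proof -
  have "mixed_diff (ext_rank (hrank G 0) (nsteps G)) b d =
      mixed_diff (\<lambda>i j. vcard G i + rel_rank G i j - rel_rank G 0 j) b d"
    by (rule mixed_diff_cong, subst ext_rank_fwd_0) (use assms in auto)
  then show ?thesis
    using assms by (simp add: fwd_pd_def pers_mult_eq_mixed_diff mixed_diff_add mixed_diff_diff
        mixed_diff_fst mixed_diff_snd)
qed

lemma fb_pd_1_filtration_birth:
  assumes "1 \<le> b" "b \<le> nsteps G"
  shows "fb_pd G 1 b d =
    (if d = nsteps G + b then nat (cycle_rank G 0 b - cycle_rank G 0 (b - 1)) else 0)"
proof (cases "b < d \<and> d \<le> 2 * nsteps G + 1")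
  case True
  have "mixed_diff (ext_rank (hrank G 1) (2 * nsteps G)) b d =
      mixed_diff (\<lambda>i j. cycle_rank G 0 i - cycle_rank G 0 (min i (j - nsteps G))) b d"
    by (rule mixed_diff_cong, subst ext_rank_fb_1) (use assms True in \<open>auto simp: plev_def\<close>)
  then show ?thesis
    using assms True by (simp add: fb_pd_def pers_mult_eq_mixed_diff mixed_diff_diff mixed_diff_fst
        mixed_diff_min)
next
  case False
  then show ?thesis
    using assms n1 by (auto simp: fb_pd_def intro: pers_mult_eq_0)
qed

lemma fb_pd_1_contraction_birth:
  assumes "nsteps G < b"
  shows "fb_pd G 1 b d =
    (if d \<le> 2 * nsteps G then fwd_pd G 0 (b - nsteps G) (d - nsteps G) else 0)"
proof (cases "b < d \<and> d \<le> 2 * nsteps G + 1")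
  case True
  let ?n = "nsteps G"
  have "mixed_diff (ext_rank (hrank G 1) (2 * ?n)) b d = mixed_diff (\<lambda>i j.
      ecard G ?n - rel_rank G (i - ?n) ?n
      - ecard G (min ?n (j - ?n)) + rel_rank G (i - ?n) (min ?n (j - ?n))) b d"
    by (rule mixed_diff_cong, subst ext_rank_fb_1)
      (use assms True in \<open>auto simp: plev_def cycle_rank_def\<close>)
  also have "\<dots> = mixed_diff (\<lambda>i j. rel_rank G (i - ?n) (min ?n (j - ?n))) b d"
    by (simp add: mixed_diff_add mixed_diff_diff mixed_diff_fst mixed_diff_snd)
  finally have fb:
    "fb_pd G 1 b d = nat (mixed_diff (\<lambda>i j. rel_rank G (i - ?n) (min ?n (j - ?n))) b d)"
    using assms True by (simp add: fb_pd_def pers_mult_eq_mixed_diff)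
  show ?thesis
  proof (cases "d \<le> 2 * ?n")
    case True
    then have "1 \<le> b - ?n" "b - ?n < d - ?n" "d - ?n \<le> ?n"
      using assms \<open>b < d \<and> d \<le> 2 * ?n + 1\<close> by auto
    moreover have "b - 1 - ?n = b - ?n - 1" "min ?n (d - 1 - ?n) = d - ?n - 1"
      "min ?n (d - ?n) = d - ?n"
      using True by auto
    ultimately show ?thesis
      using fb True fwd_pd_0_finite by (simp add: mixed_diff_def)
  next
    case False
    then have "min ?n (d - 1 - ?n) = ?n" "min ?n (d - ?n) = ?n"
      using \<open>b < d \<and> d \<le> 2 * ?n + 1\<close> by auto
    then show ?thesis
      using fb False by (simp add: mixed_diff_def)
  qed
next
  case False
  then have "fb_pd G 1 b d = 0"
    by (auto simp: fb_pd_def intro!: pers_mult_eq_0)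
  moreover have "d \<le> 2 * nsteps G \<Longrightarrow> fwd_pd G 0 (b - nsteps G) (d - nsteps G) = 0"
    using False assms by (auto simp: fwd_pd_def intro!: pers_mult_eq_0)
  ultimately show ?thesis by simp
qed

lemma fb_pd_0_contraction_birth:
  assumes "nsteps G < b" "nsteps G < d"
  shows "fb_pd G 0 b d = 0"
proof (cases "b < d \<and> d \<le> 2 * nsteps G + 1")
  case True
  let ?n = "nsteps G"
  have "mixed_diff (ext_rank (hrank G 0) (2 * ?n)) b d = mixed_diff (\<lambda>i j.
      of_bool (?n < j \<and> j \<le> 2 * ?n) + vcard G ?n - vcard G (min ?n (j - ?n))
      + rel_rank G (max (j - ?n) ?n) (plev G j) - rel_rank G (j - ?n) (plev G j)) b d"
    by (rule mixed_diff_cong, subst ext_rank_fb_0) (use assms True n1 in \<open>auto simp: plev_def\<close>)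
  then show ?thesis
    using True by (simp add: fb_pd_def pers_mult_eq_mixed_diff mixed_diff_snd)
qed (auto simp: fb_pd_def intro: pers_mult_eq_0)

lemma fb_pd_0_contraction_death:
  assumes "1 \<le> b" "b \<le> nsteps G" "nsteps G < d"
  shows "fb_pd G 0 b d = (if d = nsteps G + b then fwd_pd G 0 b (nsteps G + 1) - of_bool (b = 1)
    else if b = 1 \<and> d = 2 * nsteps G + 1 then 1 else 0)"
proof (cases "d \<le> 2 * nsteps G + 1")
  case True
  let ?n = "nsteps G"
  define \<phi> where "\<phi> k = vcard G k + rel_rank G k ?n" for k
  have "ext_rank (hrank G 0) (2 * ?n) i j =
      of_bool (1 \<le> i) * of_bool (?n < j \<and> j \<le> 2 * ?n) + (\<phi> i - \<phi> (min i (j - ?n)))"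
    if "b - 1 \<le> i" "i \<le> b" "d - 1 \<le> j" "j \<le> d" for i j
  proof -
    have "?n \<le> j" "i \<le> j" "i \<le> ?n" "j \<le> 2 * ?n + 1"
      using that assms True by auto
    then show ?thesis
      using ext_rank_fb_0[of i j]
      by (cases "j - ?n \<le> i") (auto simp: \<phi>_def plev_def min_def max_def)
  qed
  then have "mixed_diff (ext_rank (hrank G 0) (2 * ?n)) b d =
      mixed_diff (\<lambda>i j. of_bool (1 \<le> i) * of_bool (?n < j \<and> j \<le> 2 * ?n)
        + (\<phi> i - \<phi> (min i (j - ?n)))) b d"
    by (rule mixed_diff_cong)
  also have "\<dots> = of_bool (b = 1) * (of_bool (d = 2 * ?n + 1) - of_bool (d = ?n + 1))
      + (if d = ?n + b then \<phi> b - \<phi> (b - 1) else 0)"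
  proof -
    have "of_bool (1 \<le> b) - of_bool (1 \<le> b - 1) = (of_bool (b = 1) :: int)"
      using assms by auto
    moreover have "of_bool (?n < d - 1 \<and> d - 1 \<le> 2 * ?n) - of_bool (?n < d \<and> d \<le> 2 * ?n)
        = (of_bool (d = 2 * ?n + 1) - of_bool (d = ?n + 1) :: int)"
      using assms True by auto
    ultimately show ?thesis
      using assms by (simp only: mixed_diff_add mixed_diff_mult mixed_diff_diff mixed_diff_fst
          mixed_diff_min) simp
  qed
  finally have fb: "fb_pd G 0 b d =
      nat (of_bool (b = 1) * (of_bool (d = 2 * ?n + 1) - of_bool (d = ?n + 1))
        + (if d = ?n + b then \<phi> b - \<phi> (b - 1) else 0))"
    using assms by (simp add: fb_pd_def pers_mult_eq_mixed_diff)
  have "fwd_pd G 0 b (?n + 1) = nat (\<phi> b - \<phi> (b - 1))"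
    using fwd_pd_0_essential[OF assms(1,2)] by (simp add: \<phi>_def)
  then show ?thesis
    using fb assms n1 by auto
qed (use assms in \<open>auto simp: fb_pd_def intro: pers_mult_eq_0\<close>)

lemma fwd_pd_0_1_essential_pos: "1 \<le> fwd_pd G 0 1 (nsteps G + 1)"
  using hrank_0_1_nsteps_pos[OF G n1] pers_mult_1_top[OF n1] by (simp add: fwd_pd_def)

lemma fb_pd_0_1_last: "fb_pd G 0 1 (2 * nsteps G + 1) = 1"
  using fb_pd_0_contraction_death[of 1 "2 * nsteps G + 1"] n1 by simp

end

lemma pers_mult_no_stages [simp]: "pers_mult r 0 b d = 0"
  by (rule pers_mult_eq_0) auto

lemma fwd_pd_higher_degree: "2 \<le> k \<Longrightarrow> fwd_pd G k b d = 0"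
  and fb_pd_higher_degree: "2 \<le> k \<Longrightarrow> fb_pd G k b d = 0"
  by (simp_all add: fwd_pd_def fb_pd_def pers_mult_eq_mixed_diff mixed_diff_def ext_rank_def
      hrank_def)

lemma fb_pd_1_eq:
  assumes G: "filtered_graph G"
  shows "fb_pd G 1 b d =
    (if b \<le> nsteps G then
       (if d = nsteps G + b then (\<Sum>d'\<in>{b<..nsteps G + 1}. fwd_pd G 1 b d') else 0)
     else if d \<le> 2 * nsteps G then fwd_pd G 0 (b - nsteps G) (d - nsteps G)
     else 0)"
proof -
  consider "nsteps G = 0" | "1 \<le> nsteps G" "b = 0" | "1 \<le> nsteps G" "1 \<le> b" "b \<le> nsteps G"
    | "1 \<le> nsteps G" "nsteps G < b"
    by linarith
  then show ?thesis
  proof cases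
    case 1
    then show ?thesis by (simp add: fb_pd_def fwd_pd_def)
  next
    case 2
    then show ?thesis by (simp add: fb_pd_def pers_mult_eq_0 fwd_pd_1[OF G] del: One_nat_def)
  next
    case 3
    then have "(\<Sum>d'\<in>{b<..nsteps G + 1}. fwd_pd G 1 b d') =
        nat (cycle_rank G 0 b - cycle_rank G 0 (b - 1))"
      by (simp add: fwd_pd_1[OF G] del: One_nat_def)
    then show ?thesis
      using 3 by (simp add: fb_pd_1_filtration_birth[OF G] del: One_nat_def)
  next
    case 4
    then show ?thesis by (simp add: fb_pd_1_contraction_birth[OF G] del: One_nat_def)
  qed
qed

lemma fb_pd_0_eq:
  assumes G: "filtered_graph G"
  shows "fb_pd G 0 b d =
    (if b \<le> nsteps G \<and> d \<le> nsteps G then fwd_pd G 0 b d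
     else if b \<le> nsteps G \<and> d = nsteps G + b
       then fwd_pd G 0 b (nsteps G + 1) - (if b = 1 then 1 else 0)
     else if b = 1 \<and> b \<le> nsteps G \<and> d = 2 * nsteps G + 1 then 1
     else 0)"
proof -
  consider "nsteps G = 0" | "1 \<le> nsteps G" "d \<le> nsteps G" | "nsteps G < d" "b = 0"
    | "1 \<le> nsteps G" "nsteps G < d" "1 \<le> b" "b \<le> nsteps G"
    | "1 \<le> nsteps G" "nsteps G < d" "nsteps G < b"
    by linarith
  then show ?thesis
  proof cases
    case 1
    then show ?thesis by (simp add: fb_pd_def fwd_pd_def)
  next
    case 2
    have "fb_pd G 0 b d = fwd_pd G 0 b d"
      unfolding fb_pd_def fwd_pd_def by (rule pers_mult_truncate) (use 2 in auto)
    moreover have "nsteps G < b \<Longrightarrow> fwd_pd G 0 b d = 0"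
      using 2 by (auto simp: fwd_pd_def intro!: pers_mult_eq_0)
    ultimately show ?thesis
      using 2 by auto
  next
    case 3
    then show ?thesis by (simp add: fb_pd_def pers_mult_eq_0)
  next
    case 4
    then show ?thesis by (simp add: fb_pd_0_contraction_death[OF G])
  next
    case 5
    then show ?thesis by (simp add: fb_pd_0_contraction_birth[OF G])
  qed
qed

lemma fwd_pd_via_fb_pd:
  assumes G: "filtered_graph G"
  shows "fwd_pd G k b d =
    (if k \<le> 1 \<and> 1 \<le> b \<and> b \<le> nsteps G \<and> d = nsteps G + 1
     then fb_pd G k b (nsteps G + b) + of_bool (k = 0 \<and> b = 1)
     else if d \<le> nsteps G then fb_pd G k b d else 0)"
proof -
  let ?n = "nsteps G"
  consider "2 \<le> k" | "k \<le> 1" "d \<le> ?n" | "k \<le> 1" "?n < d" "\<not> (1 \<le> b \<and> b \<le> ?n \<and> d = ?n + 1)"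
    | "k = 0" "1 \<le> b" "b \<le> ?n" "d = ?n + 1" | "k = 1" "1 \<le> b" "b \<le> ?n" "d = ?n + 1"
    by force
  then show ?thesis
  proof cases
    case 1
    then show ?thesis by (simp add: fwd_pd_higher_degree fb_pd_higher_degree)
  next
    case 2
    have "fwd_pd G k b d = fb_pd G k b d"
      unfolding fb_pd_def fwd_pd_def by (rule pers_mult_truncate) (use 2 in auto)
    then show ?thesis
      using 2 by auto
  next
    case 3
    then have "fwd_pd G k b d = 0"
      by (auto simp: fwd_pd_def intro!: pers_mult_eq_0)
    then show ?thesis
      using 3 by auto
  next
    case 4
    then have "b = 1 \<Longrightarrow> 1 \<le> fwd_pd G 0 b (?n + 1)"
      using fwd_pd_0_1_essential_pos[OF G] by simp
    then show ?thesis
      using 4 fb_pd_0_contraction_death[OF G, of b "?n + b"] by auto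
  next
    case 5
    then show ?thesis
      by (simp add: fb_pd_1_filtration_birth[OF G] fwd_pd_1[OF G] del: One_nat_def)
  qed
qed

lemma last_nonzero_index_unique:
  fixes f h :: "nat \<Rightarrow> nat"
  assumes h: "strict_mono h"
    and n: "1 \<le> n \<Longrightarrow> f (h n) \<noteq> 0" "\<And>d. h n < d \<Longrightarrow> f d = 0"
    and n': "1 \<le> n' \<Longrightarrow> f (h n') \<noteq> 0" "\<And>d. h n' < d \<Longrightarrow> f d = 0"
  shows "n = n'"
proof (rule ccontr)
  assume "n \<noteq> n'"
  then consider "n < n'" | "n' < n" by linarith
  then show False
  proof cases
    case 1
    then show False using n(2)[of "h n'"] n'(1) strict_monoD[OF h 1] by simp
  next
    case 2
    then show False using n'(2)[of "h n"] n(1) strict_monoD[OF h 2] by simp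
  qed
qed

lemma nsteps_eq_if_fwd_pd_eq:
  assumes G: "filtered_graph G" and G': "filtered_graph G'"
    and eq: "\<And>d. fwd_pd G 0 1 d = fwd_pd G' 0 1 d"
  shows "nsteps G = nsteps G'"
proof (rule last_nonzero_index_unique[where f = "fwd_pd G 0 1" and h = Suc])
  show "fwd_pd G 0 1 (Suc (nsteps G)) \<noteq> 0" if "1 \<le> nsteps G"
    using fwd_pd_0_1_essential_pos[OF G that] by simp
  show "fwd_pd G 0 1 (Suc (nsteps G')) \<noteq> 0" if "1 \<le> nsteps G'"
    unfolding eq using fwd_pd_0_1_essential_pos[OF G' that] by simp
  show "fwd_pd G 0 1 d = 0" if "Suc (nsteps G') < d" for d
    unfolding eq using that by (simp add: fwd_pd_def pers_mult_eq_0)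
qed (auto simp: strict_mono_Suc_iff fwd_pd_def intro: pers_mult_eq_0)

lemma nsteps_eq_if_fb_pd_eq:
  assumes G: "filtered_graph G" and G': "filtered_graph G'"
    and eq: "\<And>d. fb_pd G 0 1 d = fb_pd G' 0 1 d"
  shows "nsteps G = nsteps G'"
proof (rule last_nonzero_index_unique[where f = "fb_pd G 0 1" and h = "\<lambda>n. 2 * n + 1"])
  show "fb_pd G 0 1 (2 * nsteps G + 1) \<noteq> 0" if "1 \<le> nsteps G"
    using fb_pd_0_1_last[OF G that] by simp
  show "fb_pd G 0 1 (2 * nsteps G' + 1) \<noteq> 0" if "1 \<le> nsteps G'"
    unfolding eq using fb_pd_0_1_last[OF G' that] by simp
  show "fb_pd G 0 1 d = 0" if "2 * nsteps G' + 1 < d" for d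
    unfolding eq using that by (simp add: fb_pd_def pers_mult_eq_0)
qed (auto simp: strict_mono_def fb_pd_def intro: pers_mult_eq_0)

lemma fb_pd_eq_if_fwd_pd_eq:
  assumes G: "filtered_graph G" and G': "filtered_graph G'"
    and eq: "\<forall>k b d. fwd_pd G k b d = fwd_pd G' k b d"
  shows "fb_pd G k b d = fb_pd G' k b d"
proof -
  have n: "nsteps G = nsteps G'"
    using nsteps_eq_if_fwd_pd_eq[OF G G'] eq by blast
  consider "k = 0" | "k = 1" | "2 \<le> k" by linarith
  then show ?thesis
    by cases (simp_all add: fb_pd_0_eq[OF G] fb_pd_0_eq[OF G'] fb_pd_1_eq[OF G] fb_pd_1_eq[OF G']
        n eq fb_pd_higher_degree del: One_nat_def)
qed

lemma fwd_pd_eq_if_fb_pd_eq: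
  assumes G: "filtered_graph G" and G': "filtered_graph G'"
    and eq: "\<forall>k b d. fb_pd G k b d = fb_pd G' k b d"
  shows "fwd_pd G k b d = fwd_pd G' k b d"
proof -
  have "nsteps G = nsteps G'"
    using nsteps_eq_if_fb_pd_eq[OF G G'] eq by blast
  then show ?thesis
    by (simp add: fwd_pd_via_fb_pd[OF G] fwd_pd_via_fb_pd[OF G'] eq)
qed

theorem proposition6:
  fixes G :: "('v, 'e) fgraph" and G' :: "('w, 'f) fgraph"
  assumes "filtered_graph G" and "filtered_graph G'"
  shows "((\<forall>k b d. fwd_pd G k b d = fwd_pd G' k b d) \<longleftrightarrow>
          (\<forall>k b d. fb_pd G k b d = fb_pd G' k b d))
    \<and> (\<forall>b d. fb_pd G 1 b d =
          (if b \<le> nsteps G then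
             (if d = nsteps G + b then (\<Sum>d'\<in>{b<..nsteps G + 1}. fwd_pd G 1 b d') else 0)
           else if d \<le> 2 * nsteps G then fwd_pd G 0 (b - nsteps G) (d - nsteps G)
           else 0))
    \<and> (\<forall>b d. fb_pd G 0 b d =
          (if b \<le> nsteps G \<and> d \<le> nsteps G then fwd_pd G 0 b d
           else if b \<le> nsteps G \<and> d = nsteps G + b
             then fwd_pd G 0 b (nsteps G + 1) - (if b = 1 then 1 else 0)
           else if b = 1 \<and> b \<le> nsteps G \<and> d = 2 * nsteps G + 1 then 1
           else 0))"
  using fb_pd_eq_if_fwd_pd_eq[OF assms] fwd_pd_eq_if_fb_pd_eq[OF assms]
    fb_pd_1_eq[OF assms(1)] fb_pd_0_eq[OF assms(1)] by blast

end
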